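(* For every $A>0$ there is a constant $\kappa(A)>0$, depending only on $A$, such that for diffusive deposition, every $N$, every $\sigma\in\mathcal X_e(A)$ and every $i\in G_N$, $$P\big(\text{explorer attaches to pile } i\,\big|\,\sigma\big)\ge\kappa(A)\frac{\sigma_i^2}{N}.$$
   Context: Diffusive deposition: for $N\ge2$, $G_N=\{1,\dots,N\}$, a configuration $\sigma\in\mathbb N^N$ gives column (pile) heights. Given $\sigma$, an explorer is a walk $(X_n,Z_n)_{n\ge0}$ with $(X_n)$ i.i.d. uniform on $G_N$, $Z_0=\max_i\sigma_i+1$, and $(Z_{n+1}-Z_n)$ i.i.d. uniform on $\{-1,1\}$ independent of $(X_n)$. With $n^*=\inf\{n:Z_n\le\sigma_{X_n}\}$, the explorer attaches to pile $X_{n^*}$. The early regime is $\mathcal X_e(A)=\{\sigma\in\mathbb N^N:\ \sum_{i=1}^N\sigma_i^2\le AN,\ \sum_{i=1}^N\sigma_i<N/2\}$. *)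

theory Defs
  imports "HOL-Probability.Probability"
begin

text \<open>One step of the explorer's randomness: the column X_n, uniform on G_N = {1..N},
  and the increment Z_{n+1} - Z_n, uniform on {-1,1}, independent of each other.\<close>
definition explorer_step :: "nat \<Rightarrow> (nat \<times> int) pmf" where
  "explorer_step N = pair_pmf (pmf_of_set {1..N}) (pmf_of_set {-1, 1})"

definition explorer_space :: "nat \<Rightarrow> (nat \<times> int) stream measure" where
  "explorer_space N = stream_space (measure_pmf (explorer_step N))"

definition expl_X :: "(nat \<times> int) stream \<Rightarrow> nat \<Rightarrow> nat" where
  "expl_X \<omega> n = fst (\<omega> !! n)"

definition expl_Z :: "nat \<Rightarrow> (nat \<Rightarrow> nat) \<Rightarrow> (nat \<times> int) stream \<Rightarrow> nat \<Rightarrow> int" where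
  "expl_Z N \<sigma> \<omega> n = int (Max (\<sigma> ` {1..N})) + 1 + (\<Sum>k<n. snd (\<omega> !! k))"

definition attaches_to :: "nat \<Rightarrow> (nat \<Rightarrow> nat) \<Rightarrow> nat \<Rightarrow> (nat \<times> int) stream set" where
  "attaches_to N \<sigma> i = {\<omega> \<in> space (explorer_space N).
     \<exists>n. expl_Z N \<sigma> \<omega> n \<le> int (\<sigma> (expl_X \<omega> n))
        \<and> (\<forall>m<n. \<not> expl_Z N \<sigma> \<omega> m \<le> int (\<sigma> (expl_X \<omega> m)))
        \<and> expl_X \<omega> n = i}"

definition attach_prob :: "nat \<Rightarrow> (nat \<Rightarrow> nat) \<Rightarrow> nat \<Rightarrow> real" where
  "attach_prob N \<sigma> i = measure (explorer_space N) (attaches_to N \<sigma> i)"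

definition early_regime :: "real \<Rightarrow> nat \<Rightarrow> (nat \<Rightarrow> nat) \<Rightarrow> bool" where
  "early_regime A N \<sigma> \<longleftrightarrow>
     real (\<Sum>i=1..N. (\<sigma> i)^2) \<le> A * real N \<and> real (\<Sum>i=1..N. \<sigma> i) < real N / 2"

end

theory Submission
  imports Defs
begin

text \<open>Started at height \<open>z\<close>, the explorer attaches to pile \<open>i\<close> with some probability \<open>q z\<close>, and
  conditioning on the first step gives \<open>q z = [z \<le> \<sigma> i]/N + c z (q (z - 1) + q (z + 1))/2\<close>, where
  \<open>c z\<close> is the fraction of piles lower than \<open>z\<close>. By a discrete maximum principle every subsolution
  of this equation that is nonpositive outside a finite window lies below \<open>q\<close>.
  Let \<open>s = \<sigma> i\<close> and \<open>b = s div 2\<close>. The weight \<open>w z = exp (-4 \<Sum>b<y\<le>z. T y)\<close>, with \<open>T y\<close> the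
  mean number of levels \<open>\<ge> y\<close> occupied by a pile, is a subsolution of the homogeneous
  equation because less than half of the piles reach height 1, and \<open>\<Sum>a. \<sigma> a\<^sup>2 \<le> A N\<close> keeps it
  above \<open>exp (-4 A)\<close>. Multiplying \<open>w\<close> by the parabola \<open>(z - b)(2 s - b - z)\<close>, capped at its
  maximum \<open>(s - b)\<^sup>2\<close> above \<open>s\<close>, costs at most \<open>1 + 8 A\<close> in the discrete product rule. So
  the product divided by \<open>1 + 8 A\<close>, minus a small linear term, is a subsolution, and at the
  starting height \<open>max \<sigma> + 1\<close> it is at least \<open>exp (-4 A) s\<^sup>2 / (8 (1 + 8 A) N)\<close>.\<close>

section \<open>A discrete maximum principle\<close>

lemma discrete_maximum_principle:
  fixes h c :: "int \<Rightarrow> real"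
  assumes c: "\<And>z. 0 \<le> c z \<and> c z \<le> 1"
    and sub: "\<And>z. h z \<le> c z * (h (z - 1) + h (z + 1)) / 2"
    and lo: "\<And>z. z \<le> lo \<Longrightarrow> h z \<le> 0" and hi: "\<And>z. hi \<le> z \<Longrightarrow> h z \<le> 0"
  shows "h z \<le> 0"
proof (rule ccontr)
  assume "\<not> h z \<le> 0"
  then have z: "z \<in> {lo..hi}" and hz: "0 < h z"
    using lo[of z] hi[of z] by force+
  define m where "m = Max (h ` {lo..hi})"
  have m_pos: "0 < m"
    using hz z by (auto simp: m_def Max_gr_iff)
  have h_le: "h x \<le> m" for x
    using lo[of x] hi[of x] m_pos by (cases "x \<in> {lo..hi}") (auto simp: m_def)
  define Z where "Z = {x \<in> {lo..hi}. h x = m}"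
  have "finite Z"
    unfolding Z_def by (rule finite_subset[of _ "{lo..hi}"]) auto
  have "m \<in> h ` {lo..hi}"
    unfolding m_def using z by (intro Max_in) auto
  then have "Z \<noteq> {}"
    by (auto simp: Z_def)
  \<comment> \<open>The rightmost maximiser is strictly above its right neighbour.\<close>
  define z\<^sub>1 where "z\<^sub>1 = Max Z"
  have "z\<^sub>1 \<in> Z"
    using \<open>finite Z\<close> \<open>Z \<noteq> {}\<close> by (simp add: z\<^sub>1_def)
  then have hz\<^sub>1: "h z\<^sub>1 = m"
    by (simp add: Z_def)
  have "z\<^sub>1 + 1 \<notin> Z"
    using Max_ge[OF \<open>finite Z\<close>, of "z\<^sub>1 + 1"] by (auto simp: z\<^sub>1_def)
  then have "h (z\<^sub>1 + 1) < m"
    using h_le[of "z\<^sub>1 + 1"] lo[of "z\<^sub>1 + 1"] hi[of "z\<^sub>1 + 1"] m_pos by (force simp: Z_def)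
  then have avg: "(h (z\<^sub>1 - 1) + h (z\<^sub>1 + 1)) / 2 < m"
    using h_le[of "z\<^sub>1 - 1"] by simp
  have "c z\<^sub>1 * ((h (z\<^sub>1 - 1) + h (z\<^sub>1 + 1)) / 2) < m"
    using c[of z\<^sub>1] avg m_pos mult_left_le_one_le[of "(h (z\<^sub>1 - 1) + h (z\<^sub>1 + 1)) / 2" "c z\<^sub>1"]
      mult_nonneg_nonpos[of "c z\<^sub>1" "(h (z\<^sub>1 - 1) + h (z\<^sub>1 + 1)) / 2"]
    by (cases "0 \<le> (h (z\<^sub>1 - 1) + h (z\<^sub>1 + 1)) / 2") linarith+
  then show False
    using sub[of z\<^sub>1] hz\<^sub>1 by simp
qed

lemma subsolution_le_solution:
  fixes q g c f :: "int \<Rightarrow> real"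
  assumes c: "\<And>z. 0 \<le> c z \<and> c z \<le> 1"
    and q: "\<And>z. q z = f z + c z * (q (z - 1) + q (z + 1)) / 2" and q_nonneg: "\<And>z. 0 \<le> q z"
    and g: "\<And>z. g z \<le> f z + c z * (g (z - 1) + g (z + 1)) / 2"
    and lo: "\<And>z. z \<le> lo \<Longrightarrow> g z \<le> 0" and hi: "\<And>z. hi \<le> z \<Longrightarrow> g z \<le> 0"
  shows "g z \<le> q z"
proof -
  have "g z - q z \<le> 0"
  proof (rule discrete_maximum_principle[OF c])
    show "g z - q z \<le> c z * ((g (z - 1) - q (z - 1)) + (g (z + 1) - q (z + 1))) / 2" for z
      using g[of z] q[of z] by (simp add: algebra_simps add_divide_distrib diff_divide_distrib)
    show "g z - q z \<le> 0" if "z \<le> lo" for z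
      using lo[OF that] q_nonneg[of z] by simp
    show "g z - q z \<le> 0" if "hi \<le> z" for z
      using hi[OF that] q_nonneg[of z] by simp
  qed
  then show ?thesis
    by simp
qed

lemma exp_two_point_ge_one:
  fixes f t :: real
  assumes "0 \<le> f" "f \<le> t" "f \<le> 1/2"
  shows "1 \<le> (1 - f) * (exp (4 * t) + exp (4 * f - 4 * t)) / 2"
proof -
  define a where "a = exp (4 * t)"
  define e where "e = exp (4 * f)"
  have a: "1 \<le> a" "e \<le> a"
    using assms by (simp_all add: a_def e_def)
  have "0 \<le> (a - 1) * (a - e) / a"
    using a by simp
  also have "\<dots> = a + e / a - e - 1"
    using a by (simp add: field_simps)
  finally have "e + 1 \<le> a + e / a"
    by simp
  moreover have "1 + 4 * f \<le> e"
    unfolding e_def using exp_ge_add_one_self[of "4 * f"] by simp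
  moreover have "1 \<le> (1 - f) * (2 + 4 * f) / 2"
    using mult_nonneg_nonneg[of f "1 - 2 * f"] assms by (simp add: algebra_simps)
  moreover have "(1 - f) * (2 + 4 * f) / 2 \<le> (1 - f) * (a + e / a) / 2"
    using calculation assms by (intro divide_right_mono mult_left_mono) auto
  ultimately have "1 \<le> (1 - f) * (a + e / a) / 2"
    by linarith
  then show ?thesis
    by (simp add: a_def e_def exp_diff)
qed

lemma exp_minus_diff_le:
  fixes x y :: real
  assumes "0 \<le> x" "x \<le> y"
  shows "exp (- x) - exp (- y) \<le> y - x"
proof -
  have "exp (- x) - exp (- y) = exp (- x) * (1 - exp (- (y - x)))"
    by (simp add: algebra_simps flip: exp_add)
  also have "\<dots> \<le> 1 * (y - x)"
  proof (rule mult_mono)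
    show "1 - exp (- (y - x)) \<le> y - x"
      using exp_ge_add_one_self[of "- (y - x)"] by linarith
  qed (use assms in auto)
  finally show ?thesis
    by simp
qed

lemma discrete_product_rule_bound:
  fixes c w w\<^sub>m w\<^sub>p Q u\<^sub>m u\<^sub>p d B :: real
  assumes w: "w \<le> c * (w\<^sub>m + w\<^sub>p) / 2" and c: "0 \<le> c" "c \<le> 1"
    and w\<^sub>p: "0 \<le> w\<^sub>p" "w\<^sub>p \<le> w\<^sub>m" "w\<^sub>m \<le> 1" and Q: "0 \<le> Q" and d: "0 \<le> d"
    and u\<^sub>m: "u\<^sub>m = Q - (2 * d + 1)" and u\<^sub>p: "Q + (2 * d - 1) \<le> u\<^sub>p"
    and B: "(w\<^sub>m - w\<^sub>p) * d \<le> B"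
  shows "w * Q \<le> 1 + B + c * (w\<^sub>m * u\<^sub>m + w\<^sub>p * u\<^sub>p) / 2"
proof -
  have "c * (w\<^sub>m * u\<^sub>m + w\<^sub>p * (Q + (2 * d - 1))) / 2 \<le> c * (w\<^sub>m * u\<^sub>m + w\<^sub>p * u\<^sub>p) / 2"
    using u\<^sub>p w\<^sub>p c by (intro divide_right_mono mult_left_mono add_left_mono) auto
  moreover have "c * (w\<^sub>m * u\<^sub>m + w\<^sub>p * (Q + (2 * d - 1))) / 2
      = Q * (c * (w\<^sub>m + w\<^sub>p) / 2) - c * ((w\<^sub>m - w\<^sub>p) * d) - c * (w\<^sub>m + w\<^sub>p) / 2"
    by (simp add: u\<^sub>m field_simps)
  moreover have "w * Q \<le> Q * (c * (w\<^sub>m + w\<^sub>p) / 2)"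
    using mult_left_mono[OF w Q] by (simp add: mult.commute)
  moreover have "c * ((w\<^sub>m - w\<^sub>p) * d) \<le> B"
    using mult_left_le_one_le[of "(w\<^sub>m - w\<^sub>p) * d" c] w\<^sub>p c d B by simp
  moreover have "c * (w\<^sub>m + w\<^sub>p) / 2 \<le> 1"
    using mult_mono[of c 1 "w\<^sub>m + w\<^sub>p" 2] w\<^sub>p c by simp
  ultimately show ?thesis
    by linarith
qed

lemma negative_ramp_sub:
  fixes c :: "int \<Rightarrow> real"
  assumes "\<And>z. z \<le> 0 \<Longrightarrow> c z = 0" and "\<And>z. c z \<le> 1" and "0 \<le> E"
  shows "- E * max 0 (real_of_int z)
    \<le> c z * (- E * max 0 (real_of_int (z - 1)) - E * max 0 (real_of_int (z + 1))) / 2"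
proof (cases "z \<le> 0")
  case False
  then have "c z * (E * real_of_int z) \<le> 1 * (E * real_of_int z)"
    using assms by (intro mult_right_mono) auto
  then show ?thesis
    using False by (simp add: algebra_simps)
qed (use assms in simp)

section \<open>The explorer as a random walk in height\<close>

definition walk_height :: "int \<Rightarrow> (nat \<times> int) stream \<Rightarrow> nat \<Rightarrow> int" where
  "walk_height z \<omega> n = z + (\<Sum>k<n. snd (\<omega> !! k))"

definition attaches_from :: "(nat \<Rightarrow> nat) \<Rightarrow> nat \<Rightarrow> int \<Rightarrow> (nat \<times> int) stream set" where
  "attaches_from \<sigma> i z = {\<omega>. \<exists>n. walk_height z \<omega> n \<le> int (\<sigma> (fst (\<omega> !! n)))
     \<and> (\<forall>m<n. \<not> walk_height z \<omega> m \<le> int (\<sigma> (fst (\<omega> !! m)))) \<and> fst (\<omega> !! n) = i}"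

lemma walk_height_0 [simp]: "walk_height z \<omega> 0 = z"
  by (simp add: walk_height_def)

lemma walk_height_Stream_Suc [simp]:
  "walk_height z (x ## \<omega>) (Suc n) = walk_height (z + snd x) \<omega> n"
  unfolding walk_height_def by (induct n) (simp_all add: algebra_simps)

lemma ex_first_index_Suc:
  "(\<exists>n. P n \<and> (\<forall>m<n. \<not> P m) \<and> R n) \<longleftrightarrow>
     P 0 \<and> R 0 \<or> \<not> P 0 \<and> (\<exists>n. P (Suc n) \<and> (\<forall>m<n. \<not> P (Suc m)) \<and> R (Suc n))"
proof
  assume "\<exists>n. P n \<and> (\<forall>m<n. \<not> P m) \<and> R n"
  then obtain n where "P n" "\<forall>m<n. \<not> P m" "R n"
    by blast
  then show "P 0 \<and> R 0 \<or> \<not> P 0 \<and> (\<exists>n. P (Suc n) \<and> (\<forall>m<n. \<not> P (Suc m)) \<and> R (Suc n))"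
    by (cases n) auto
next
  assume "P 0 \<and> R 0 \<or> \<not> P 0 \<and> (\<exists>n. P (Suc n) \<and> (\<forall>m<n. \<not> P (Suc m)) \<and> R (Suc n))"
  then show "\<exists>n. P n \<and> (\<forall>m<n. \<not> P m) \<and> R n"
  proof
    assume "\<not> P 0 \<and> (\<exists>n. P (Suc n) \<and> (\<forall>m<n. \<not> P (Suc m)) \<and> R (Suc n))"
    then obtain n where "\<not> P 0" "P (Suc n)" "\<forall>m<n. \<not> P (Suc m)" "R (Suc n)"
      by blast
    then show ?thesis
      by (intro exI[of _ "Suc n"]) (auto simp: less_Suc_eq_0_disj)
  qed blast
qed

lemma Stream_in_attaches_from:
  "x ## \<omega> \<in> attaches_from \<sigma> i z \<longleftrightarrow>
     (z \<le> int (\<sigma> (fst x)) \<and> fst x = i) \<or>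
     (\<not> z \<le> int (\<sigma> (fst x)) \<and> \<omega> \<in> attaches_from \<sigma> i (z + snd x))"
  unfolding attaches_from_def mem_Collect_eq by (subst ex_first_index_Suc) simp

lemma attaches_from_measurable:
  "attaches_from \<sigma> i z \<in> sets (stream_space (measure_pmf p))"
proof -
  have [measurable]:
    "(\<lambda>\<omega>. walk_height z \<omega> n) \<in> measurable (stream_space (measure_pmf p)) (count_space UNIV)" for n
  proof -
    have "walk_height z \<omega> n = z + sum_list (map snd (stake n \<omega>))" for \<omega>
      unfolding walk_height_def
      by (induct n arbitrary: \<omega>) (simp_all add: sum.lessThan_Suc_shift del: sum.lessThan_Suc)
    then show ?thesis
      by (simp add:
          measurable_cong_sets[OF sets_stream_space_cong[OF sets_measure_pmf_count_space] refl])
  qed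
  have "attaches_from \<sigma> i z = {\<omega> \<in> space (stream_space (measure_pmf p)).
     \<exists>n. walk_height z \<omega> n \<le> int (\<sigma> (fst (\<omega> !! n)))
     \<and> (\<forall>m<n. \<not> walk_height z \<omega> m \<le> int (\<sigma> (fst (\<omega> !! m)))) \<and> fst (\<omega> !! n) = i}"
    by (simp add: attaches_from_def space_stream_space)
  also have "\<dots> \<in> sets (stream_space (measure_pmf p))"
    by measurable
  finally show ?thesis .
qed

lemma nn_integral_explorer_step:
  assumes "N \<ge> 1" and "\<And>t. 0 \<le> f t"
  shows "(\<integral>\<^sup>+t. ennreal (f t) \<partial>explorer_step N)
    = ennreal ((\<Sum>a\<in>{1..N}. f (a, -1) + f (a, 1)) / (2 * real N))"
proof -
  have half: "ennreal x / 2 = ennreal (x / 2)" if "0 \<le> x" for x :: real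
    using that divide_ennreal[of x 2] by simp
  have "(\<integral>\<^sup>+t. ennreal (f t) \<partial>explorer_step N)
      = (\<Sum>a\<in>{1..N}. ennreal ((f (a, -1) + f (a, 1)) / 2)) / ennreal (real N)"
    using assms unfolding explorer_step_def nn_integral_pair_pmf'
    by (simp add: nn_integral_pmf_of_set ennreal_of_nat_eq_real_of_nat ennreal_plus[symmetric]
        half del: ennreal_plus)
  also have "\<dots> = ennreal (\<Sum>a\<in>{1..N}. (f (a, -1) + f (a, 1)) / 2) / ennreal (real N)"
    using assms by (subst sum_ennreal) (auto intro: add_nonneg_nonneg)
  also have "\<dots> = ennreal ((\<Sum>a\<in>{1..N}. (f (a, -1) + f (a, 1)) / 2) / real N)"
    using assms by (simp add: divide_ennreal sum_nonneg)
  finally show ?thesis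
    by (simp add: sum_divide_distrib[symmetric])
qed

context
  fixes N :: nat and \<sigma> :: "nat \<Rightarrow> nat"
begin

definition attach_prob_from :: "nat \<Rightarrow> int \<Rightarrow> real" where
  "attach_prob_from i z = measure (explorer_space N) (attaches_from \<sigma> i z)"

definition frac_below :: "int \<Rightarrow> real" where
  "frac_below z = real (card {a \<in> {1..N}. int (\<sigma> a) < z}) / real N"

lemma attach_prob_from_first_step:
  assumes N: "N \<ge> 1"
  shows "attach_prob_from i z = (\<Sum>a\<in>{1..N}. if z \<le> int (\<sigma> a) then 2 * of_bool (a = i)
    else attach_prob_from i (z - 1) + attach_prob_from i (z + 1)) / (2 * real N)"
proof -
  let ?q = "attach_prob_from i" and ?S = "stream_space (measure_pmf (explorer_step N))"
  define val where
    "val t = (if z \<le> int (\<sigma> (fst t)) then of_bool (fst t = i) else ?q (z + snd t))" for t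
  have val_nonneg: "0 \<le> val t" for t
    by (simp add: val_def attach_prob_from_def)
  interpret S: prob_space ?S
    by (simp add: prob_space.prob_space_stream_space prob_space_measure_pmf)
  have shift: "S.prob {\<omega>. t ## \<omega> \<in> attaches_from \<sigma> i z} = val t" for t
  proof -
    have "{\<omega>. t ## \<omega> \<in> attaches_from \<sigma> i z} =
       (if z \<le> int (\<sigma> (fst t)) then (if fst t = i then space ?S else {})
        else attaches_from \<sigma> i (z + snd t))"
      by (auto simp: Stream_in_attaches_from space_stream_space)
    then show ?thesis
      by (simp add: val_def attach_prob_from_def explorer_space_def S.prob_space)
  qed
  have "ennreal (?q z) = \<P>(\<omega> in ?S. \<omega> \<in> attaches_from \<sigma> i z)"
    by (simp add: attach_prob_from_def explorer_space_def space_stream_space)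
  also have "\<dots> = (\<integral>\<^sup>+t. ennreal (val t) \<partial>explorer_step N)"
    using attaches_from_measurable[of \<sigma> i z "explorer_step N"]
    by (subst prob_space.prob_stream_space)
      (simp_all add: prob_space_measure_pmf shift space_stream_space)
  also have "\<dots> = ennreal ((\<Sum>a\<in>{1..N}. val (a, -1) + val (a, 1)) / (2 * real N))"
    by (rule nn_integral_explorer_step[OF N val_nonneg])
  finally have "?q z = (\<Sum>a\<in>{1..N}. val (a, -1) + val (a, 1)) / (2 * real N)"
    using val_nonneg
    by (subst (asm) ennreal_inj)
      (auto simp: attach_prob_from_def intro!: sum_nonneg divide_nonneg_nonneg add_nonneg_nonneg)
  also have "(\<Sum>a\<in>{1..N}. val (a, -1) + val (a, 1)) = (\<Sum>a\<in>{1..N}.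
      if z \<le> int (\<sigma> a) then 2 * of_bool (a = i) else ?q (z - 1) + ?q (z + 1))"
    by (intro sum.cong) (auto simp: val_def)
  finally show ?thesis .
qed

lemma attach_prob_from_rec:
  assumes N: "N \<ge> 1" and i: "i \<in> {1..N}"
  shows "attach_prob_from i z = (if z \<le> int (\<sigma> i) then 1 / real N else 0)
    + frac_below z * (attach_prob_from i (z - 1) + attach_prob_from i (z + 1)) / 2"
proof -
  let ?q = "attach_prob_from i"
  have "(\<Sum>a\<in>{1..N}. if z \<le> int (\<sigma> a) then 2 * of_bool (a = i) else ?q (z - 1) + ?q (z + 1))
      = (\<Sum>a\<in>{1..N}. (if a = i then if z \<le> int (\<sigma> i) then 2 else 0 else 0)
          + (if int (\<sigma> a) < z then ?q (z - 1) + ?q (z + 1) else 0))"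
    by (intro sum.cong) auto
  also have "\<dots> = (if z \<le> int (\<sigma> i) then 2 else 0)
      + real (card {a \<in> {1..N}. int (\<sigma> a) < z}) * (?q (z - 1) + ?q (z + 1))"
    using i
    by (simp only: sum.distrib sum.delta finite_atLeastAtMost) (simp add: sum.If_cases Int_def)
  finally show ?thesis
    using N by (subst attach_prob_from_first_step[OF N]) (simp add: frac_below_def field_simps)
qed

section \<open>The damping weight\<close>

definition frac_at_least :: "int \<Rightarrow> real" where
  "frac_at_least z = real (card {a \<in> {1..N}. z \<le> int (\<sigma> a)}) / real N"

definition mean_excess :: "int \<Rightarrow> real" where
  "mean_excess y = (\<Sum>a\<in>{1..N}. max 0 (real (\<sigma> a) - real_of_int y + 1)) / real N"

definition cum_excess :: "int \<Rightarrow> int \<Rightarrow> real" where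
  "cum_excess b z = (\<Sum>y\<in>{b + 1..z}. mean_excess y)"

definition damping :: "int \<Rightarrow> int \<Rightarrow> real" where
  "damping b z = exp (- 4 * cum_excess b z)"

lemma frac_below_eq:
  assumes "N \<ge> 1"
  shows "frac_below z = 1 - frac_at_least z"
proof -
  have "{1..N} = {a \<in> {1..N}. int (\<sigma> a) < z} \<union> {a \<in> {1..N}. z \<le> int (\<sigma> a)}"
    by auto
  also have "card \<dots> = card {a \<in> {1..N}. int (\<sigma> a) < z} + card {a \<in> {1..N}. z \<le> int (\<sigma> a)}"
    by (intro card_Un_disjoint) auto
  finally show ?thesis
    using assms by (simp add: frac_below_def frac_at_least_def field_simps flip: of_nat_add)
qed

lemma frac_below_nonneg: "0 \<le> frac_below z"
  by (simp add: frac_below_def)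

lemma frac_below_le_one: "N \<ge> 1 \<Longrightarrow> frac_below z \<le> 1"
  by (simp add: frac_below_eq frac_at_least_def)

lemma frac_below_eq_0: "z \<le> 0 \<Longrightarrow> frac_below z = 0"
  by (simp add: frac_below_def)

lemma frac_at_least_le_half:
  assumes N: "N \<ge> 1" and z: "1 \<le> z" and sum: "real (\<Sum>a=1..N. \<sigma> a) < real N / 2"
  shows "frac_at_least z \<le> 1 / 2"
proof -
  let ?S = "{a \<in> {1..N}. z \<le> int (\<sigma> a)}"
  have "card ?S = (\<Sum>a\<in>?S. 1)"
    by simp
  also have "\<dots> \<le> (\<Sum>a\<in>?S. \<sigma> a)"
    using z by (intro sum_mono) auto
  also have "\<dots> \<le> (\<Sum>a=1..N. \<sigma> a)"
    by (intro sum_mono2) auto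
  finally have "real (card ?S) \<le> real (\<Sum>a=1..N. \<sigma> a)"
    by (simp only: of_nat_le_iff)
  then show ?thesis
    using sum N by (simp add: frac_at_least_def field_simps)
qed

lemma frac_at_least_nonneg: "0 \<le> frac_at_least z"
  by (simp add: frac_at_least_def)

lemma mean_excess_diff: "mean_excess z - mean_excess (z + 1) = frac_at_least z"
proof -
  have "(\<Sum>a\<in>{1..N}. max 0 (real (\<sigma> a) - real_of_int z + 1))
      - (\<Sum>a\<in>{1..N}. max 0 (real (\<sigma> a) - real_of_int (z + 1) + 1))
      = (\<Sum>a\<in>{1..N}. if z \<le> int (\<sigma> a) then 1 else 0)"
    by (simp flip: sum_subtractf) (intro sum.cong; auto)
  then show ?thesis
    by (simp add: mean_excess_def frac_at_least_def sum.If_cases Int_def flip: diff_divide_distrib)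
qed

lemma mean_excess_nonneg: "0 \<le> mean_excess y"
  by (simp add: mean_excess_def sum_nonneg)

lemma mean_excess_antimono: "y \<le> z \<Longrightarrow> mean_excess z \<le> mean_excess y"
proof (induct z rule: int_ge_induct)
  case (step z)
  then show ?case
    using mean_excess_diff[of z] frac_at_least_nonneg[of z] by simp
qed simp

lemma cum_excess_step: "b + 1 \<le> z \<Longrightarrow> cum_excess b z = cum_excess b (z - 1) + mean_excess z"
proof -
  assume "b + 1 \<le> z"
  then have "{b + 1..z} = insert z {b + 1..z - 1}"
    by auto
  then show ?thesis
    by (simp add: cum_excess_def)
qed

lemma cum_excess_nonneg: "0 \<le> cum_excess b z"
  by (simp add: cum_excess_def sum_nonneg mean_excess_nonneg)

lemma cum_excess_le:
  assumes "0 \<le> b"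
  shows "cum_excess b z \<le> real (\<Sum>a=1..N. (\<sigma> a)^2) / real N"
proof -
  have pile: "(\<Sum>y\<in>{b + 1..z}. max 0 (real x - real_of_int y + 1)) \<le> real (x^2)" for x
  proof -
    have "(\<Sum>y\<in>{b + 1..z}. max 0 (real x - real_of_int y + 1))
        \<le> (\<Sum>y\<in>{b + 1..z}. if y \<le> int x then real x else 0)"
      using assms by (intro sum_mono) auto
    also have "\<dots> = real x * card {y \<in> {b + 1..z}. y \<le> int x}"
      by (simp add: sum.If_cases Int_def)
    also have "\<dots> \<le> real x * card {1..int x}"
    proof -
      have "card {y \<in> {b + 1..z}. y \<le> int x} \<le> card {1..int x}"
        using assms by (intro card_mono) auto
      then show ?thesis
        by (intro mult_left_mono) auto
    qed
    finally show ?thesis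
      by (simp add: power2_eq_square)
  qed
  have "cum_excess b z
      = (\<Sum>a\<in>{1..N}. \<Sum>y\<in>{b + 1..z}. max 0 (real (\<sigma> a) - real_of_int y + 1)) / real N"
    unfolding cum_excess_def mean_excess_def
    by (simp add: sum_divide_distrib[symmetric] sum.swap[of _ "{b + 1..z}"])
  also have "\<dots> \<le> (\<Sum>a\<in>{1..N}. real ((\<sigma> a)^2)) / real N"
    by (intro divide_right_mono sum_mono pile) auto
  finally show ?thesis
    by simp
qed

lemma damping_pos: "0 < damping b z"
  by (simp add: damping_def)

lemma damping_le_one: "damping b z \<le> 1"
  using cum_excess_nonneg[of b z] by (simp add: damping_def)

lemma damping_ge:
  assumes "0 \<le> b" and "real (\<Sum>a=1..N. (\<sigma> a)^2) \<le> A * real N" and "N \<ge> 1"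
  shows "exp (- 4 * A) \<le> damping b z"
proof -
  have "cum_excess b z \<le> real (\<Sum>a=1..N. (\<sigma> a)^2) / real N"
    by (rule cum_excess_le[OF assms(1)])
  also have "\<dots> \<le> A"
    using assms(2,3) by (simp add: pos_divide_le_eq)
  finally have "cum_excess b z \<le> A" .
  then show ?thesis
    by (simp add: damping_def)
qed

text \<open>Below half density the damping is a subsolution of the homogeneous equation: leaving a
  level to the left gains the factor \<open>exp (4 t)\<close>, to the right only \<open>exp (4 f - 4 t)\<close>.\<close>
lemma damping_sub:
  assumes N: "N \<ge> 1" and b: "0 \<le> b" and z: "b + 1 \<le> z"
    and sum: "real (\<Sum>a=1..N. \<sigma> a) < real N / 2"
  shows "damping b z \<le> frac_below z * (damping b (z - 1) + damping b (z + 1)) / 2"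
proof -
  let ?t = "mean_excess z" and ?f = "frac_at_least z"
  have "?f \<le> ?t"
    using mean_excess_diff[of z] mean_excess_nonneg[of "z + 1"] by simp
  have "damping b (z - 1) = damping b z * exp (4 * ?t)"
    using cum_excess_step[OF z] by (simp add: damping_def algebra_simps flip: exp_add)
  moreover have "damping b (z + 1) = damping b z * exp (4 * ?f - 4 * ?t)"
    using cum_excess_step[of b "z + 1"] z mean_excess_diff[of z]
    by (simp add: damping_def algebra_simps flip: exp_add)
  moreover have
    "damping b z * 1 \<le> damping b z * ((1 - ?f) * (exp (4 * ?t) + exp (4 * ?f - 4 * ?t)) / 2)"
    using frac_at_least_le_half[OF N _ sum, of z] z b \<open>?f \<le> ?t\<close>
    by (intro mult_left_mono exp_two_point_ge_one frac_at_least_nonneg) (auto simp: damping_def)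
  ultimately show ?thesis
    by (simp add: frac_below_eq[OF N] algebra_simps)
qed

lemma damping_diff:
  assumes z: "b + 1 \<le> z"
  shows "damping b (z + 1) \<le> damping b (z - 1)"
    and "damping b (z - 1) - damping b (z + 1) \<le> 8 * mean_excess (b + 1)"
proof -
  have step: "cum_excess b (z + 1) = cum_excess b (z - 1) + mean_excess z + mean_excess (z + 1)"
    using cum_excess_step[of b "z + 1"] cum_excess_step[of b z] z by simp
  then have le: "cum_excess b (z - 1) \<le> cum_excess b (z + 1)"
    using mean_excess_nonneg[of z] mean_excess_nonneg[of "z + 1"] by simp
  then show "damping b (z + 1) \<le> damping b (z - 1)"
    by (simp add: damping_def)
  have "damping b (z - 1) - damping b (z + 1) \<le> 4 * cum_excess b (z + 1) - 4 * cum_excess b (z - 1)"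
    unfolding damping_def
    using exp_minus_diff_le[of "4 * cum_excess b (z - 1)"] le cum_excess_nonneg by simp
  also have "\<dots> \<le> 8 * mean_excess (b + 1)"
    using step z mean_excess_antimono[of "b + 1" z] mean_excess_antimono[of "b + 1" "z + 1"] by simp
  finally show "damping b (z - 1) - damping b (z + 1) \<le> 8 * mean_excess (b + 1)" .
qed

lemma mean_excess_mult_gap_le:
  assumes b: "b = int (s div 2)"
  shows "mean_excess (b + 1) * (real s - real_of_int b) \<le> real (\<Sum>a=1..N. (\<sigma> a)^2) / real N"
proof -
  have gap: "0 \<le> real s - real_of_int b" "real s - real_of_int b \<le> real_of_int b + 1"
    using b by linarith+
  \<comment> \<open>Only piles higher than \<open>b\<close> contribute, and those are at least as high as the gap \<open>s - b\<close>.\<close>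
  have pile: "max 0 (real x - real_of_int (b + 1) + 1) * (real s - real_of_int b) \<le> real (x^2)"
    for x
  proof (cases "int x \<le> b")
    case False
    then have "(real x - real_of_int b) * (real s - real_of_int b) \<le> real x * real x"
      using gap b by (intro mult_mono) auto
    then show ?thesis
      using False by (simp add: power2_eq_square)
  qed simp
  have "mean_excess (b + 1) * (real s - real_of_int b)
      = (\<Sum>a\<in>{1..N}. max 0 (real (\<sigma> a) - real_of_int (b + 1) + 1) * (real s - real_of_int b))
        / real N"
    by (simp add: mean_excess_def sum_distrib_right)
  also have "\<dots> \<le> (\<Sum>a\<in>{1..N}. real ((\<sigma> a)^2)) / real N"
    by (intro divide_right_mono sum_mono pile) auto
  finally show ?thesis
    by simp
qed


section \<open>The barrier\<close>

definition parabola :: "nat \<Rightarrow> int \<Rightarrow> int \<Rightarrow> real" where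
  "parabola s b z = (real_of_int z - real_of_int b) * (2 * real s - real_of_int b - real_of_int z)"

definition capped_parabola :: "nat \<Rightarrow> int \<Rightarrow> int \<Rightarrow> real" where
  "capped_parabola s b z =
     (if z \<le> b then 0 else if z \<le> int s then parabola s b z else (real s - real_of_int b)^2)"

lemma parabola_le: "parabola s b z \<le> (real s - real_of_int b)^2"
proof -
  have "(real s - real_of_int b)^2 - parabola s b z = (real s - real_of_int z)^2"
    by (simp add: parabola_def power2_eq_square algebra_simps)
  then show ?thesis
    by (metis diff_ge_0_iff_ge zero_le_power2)
qed

lemma capped_parabola_nonneg: "b \<le> int s \<Longrightarrow> 0 \<le> capped_parabola s b z"
  by (auto simp: capped_parabola_def parabola_def)

lemma capped_parabola_above:
  "b \<le> int s \<Longrightarrow> int s \<le> z \<Longrightarrow> capped_parabola s b z = (real s - real_of_int b)^2"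
  by (cases "z = int s") (auto simp: capped_parabola_def parabola_def power2_eq_square)

lemma capped_parabola_le: "capped_parabola s b z \<le> (real s - real_of_int b)^2"
  using parabola_le[of s b z] by (simp add: capped_parabola_def)

lemma damping_parabola_sub:
  assumes N: "N \<ge> 1" and sum: "real (\<Sum>a=1..N. \<sigma> a) < real N / 2"
    and sq: "real (\<Sum>a=1..N. (\<sigma> a)^2) \<le> A * real N"
    and b: "b = int (s div 2)" and z: "b + 1 \<le> z" "z \<le> int s"
  shows "damping b z * parabola s b z \<le> 1 + 8 * A + frac_below z *
    (damping b (z - 1) * capped_parabola s b (z - 1)
      + damping b (z + 1) * capped_parabola s b (z + 1)) / 2"
proof (rule discrete_product_rule_bound)
  let ?d = "real s - real_of_int z"
  show "damping b z \<le> frac_below z * (damping b (z - 1) + damping b (z + 1)) / 2"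
    using damping_sub[OF N _ z(1) sum] b by simp
  show "capped_parabola s b (z - 1) = parabola s b z - (2 * ?d + 1)"
    using z by (cases "z - 1 \<le> b") (auto simp: capped_parabola_def parabola_def algebra_simps)
  show "parabola s b z + (2 * ?d - 1) \<le> capped_parabola s b (z + 1)"
    using z parabola_le[of s b "z + 1"]
    by (cases "z + 1 \<le> int s")
      (auto simp: capped_parabola_def parabola_def algebra_simps power2_eq_square)
  have "(damping b (z - 1) - damping b (z + 1)) * ?d
      \<le> 8 * mean_excess (b + 1) * (real s - real_of_int b)"
    using damping_diff[OF z(1)] z mean_excess_nonneg[of "b + 1"] by (intro mult_mono) auto
  also have "\<dots> \<le> 8 * A"
    using order_trans[OF mean_excess_mult_gap_le[OF b]] sq N by (simp add: pos_divide_le_eq)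
  finally show "(damping b (z - 1) - damping b (z + 1)) * ?d \<le> 8 * A" .
qed (use z damping_diff[OF z(1)] frac_below_nonneg frac_below_le_one[OF N]
      damping_pos[THEN less_imp_le] damping_le_one in \<open>auto simp: parabola_def\<close>)

definition barrier :: "real \<Rightarrow> nat \<Rightarrow> int \<Rightarrow> real" where
  "barrier A s z = damping (int (s div 2)) z * capped_parabola s (int (s div 2)) z / (1 + 8 * A)"

lemma barrier_eq_0: "z \<le> int (s div 2) \<Longrightarrow> barrier A s z = 0"
  by (simp add: barrier_def capped_parabola_def)

lemma barrier_nonneg: "0 \<le> A \<Longrightarrow> 0 \<le> barrier A s z"
  using damping_pos capped_parabola_nonneg[of "int (s div 2)" s]
  by (simp add: barrier_def less_imp_le)

lemma barrier_le: "0 \<le> A \<Longrightarrow> barrier A s z \<le> real (s^2)"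
proof -
  assume A: "0 \<le> A"
  let ?b = "int (s div 2)"
  have "barrier A s z \<le> 1 * (real s - real_of_int ?b)^2 / 1"
    unfolding barrier_def using A damping_le_one damping_pos[of ?b z] capped_parabola_le[of s ?b z]
      capped_parabola_nonneg[of ?b s z] by (intro frac_le mult_mono) auto
  also have "\<dots> \<le> real (s^2)"
    by (simp add: power_mono)
  finally show ?thesis .
qed

lemma barrier_sub:
  assumes N: "N \<ge> 1" and s: "s \<ge> 1" and A: "0 \<le> A"
    and sum: "real (\<Sum>a=1..N. \<sigma> a) < real N / 2"
    and sq: "real (\<Sum>a=1..N. (\<sigma> a)^2) \<le> A * real N"
  shows "barrier A s z \<le> (if z \<le> int s then 1 else 0)
    + frac_below z * (barrier A s (z - 1) + barrier A s (z + 1)) / 2"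
proof -
  define b where "b = int (s div 2)"
  have b: "0 \<le> b" "b + 1 \<le> int s"
    using s by (auto simp: b_def)
  have barrier_eq: "barrier A s x = damping b x * capped_parabola s b x / (1 + 8 * A)" for x
    by (simp add: barrier_def b_def)
  consider "z \<le> b" | "b + 1 \<le> z" "z \<le> int s" | "int s < z"
    by linarith
  then show ?thesis
  proof cases
    case 1
    then have "barrier A s z = 0"
      by (simp add: barrier_eq_0 b_def)
    moreover have "0 \<le> frac_below z * (barrier A s (z - 1) + barrier A s (z + 1)) / 2"
      using barrier_nonneg[OF A] frac_below_nonneg by simp
    ultimately show ?thesis
      by simp
  next
    case 2
    have "damping b z * capped_parabola s b z / (1 + 8 * A) \<le> (1 + 8 * A + frac_below z *
        (damping b (z - 1) * capped_parabola s b (z - 1)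
         + damping b (z + 1) * capped_parabola s b (z + 1)) / 2) / (1 + 8 * A)"
      using damping_parabola_sub[OF N sum sq b_def 2] 2 A
      by (intro divide_right_mono) (auto simp: capped_parabola_def)
    moreover have "(K + c * (P + Q) / 2) / K = 1 + c * (P / K + Q / K) / 2"
      if "0 < K" for K c P Q :: real
      using that by (simp add: field_simps)
    ultimately show ?thesis
      using 2 A by (simp add: barrier_eq)
  next
    case 3
    let ?c = "(real s - real_of_int b)^2 / (1 + 8 * A)"
    have "barrier A s x = damping b x * ?c" if "int s \<le> x" for x
      using that b by (simp add: barrier_eq capped_parabola_above)
    moreover have
      "damping b z * ?c \<le> frac_below z * (damping b (z - 1) + damping b (z + 1)) / 2 * ?c"
      using damping_sub[OF N b(1) _ sum, of z] 3 b A by (intro mult_right_mono) auto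
    ultimately show ?thesis
      using 3 by (simp add: algebra_simps)
  qed
qed

lemma barrier_start_ge:
  assumes N: "N \<ge> 1" and A: "0 \<le> A" and sq: "real (\<Sum>a=1..N. (\<sigma> a)^2) \<le> A * real N"
    and M: "s \<le> M"
  shows "exp (- 4 * A) * real (s^2) / (4 * (1 + 8 * A)) \<le> barrier A s (int M + 1)"
proof -
  let ?b = "int (s div 2)"
  have "real (s^2) / 4 = (real s / 2)^2"
    by (simp add: power_divide)
  also have "\<dots> \<le> (real s - real_of_int ?b)^2"
    by (intro power_mono) linarith+
  also have "\<dots> = capped_parabola s ?b (int M + 1)"
    using M by (simp add: capped_parabola_def)
  finally have
    "exp (- 4 * A) * (real (s^2) / 4) \<le> damping ?b (int M + 1) * capped_parabola s ?b (int M + 1)"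
    using damping_ge[OF _ sq N, of ?b] damping_pos[of ?b "int M + 1"] by (intro mult_mono) auto
  then have "exp (- 4 * A) * (real (s^2) / 4) / (1 + 8 * A) \<le> barrier A s (int M + 1)"
    unfolding barrier_def using A by (intro divide_right_mono) auto
  then show ?thesis
    by (simp add: mult.commute)
qed

definition lower_barrier :: "real \<Rightarrow> nat \<Rightarrow> real \<Rightarrow> int \<Rightarrow> real" where
  "lower_barrier A s E z = (barrier A s z - E * max 0 (real_of_int z)) / real N"

lemma lower_barrier_sub:
  assumes N: "N \<ge> 1" and s: "s \<ge> 1" and A: "0 \<le> A" and E: "0 \<le> E"
    and sum: "real (\<Sum>a=1..N. \<sigma> a) < real N / 2"
    and sq: "real (\<Sum>a=1..N. (\<sigma> a)^2) \<le> A * real N"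
  shows "lower_barrier A s E z \<le> (if z \<le> int s then 1 / real N else 0)
    + frac_below z * (lower_barrier A s E (z - 1) + lower_barrier A s E (z + 1)) / 2"
proof -
  let ?c = "frac_below z" and ?B = "barrier A s" and ?R = "\<lambda>x. E * max 0 (real_of_int x)"
  have "?B z \<le> (if z \<le> int s then 1 else 0) + ?c * (?B (z - 1) + ?B (z + 1)) / 2"
    by (rule barrier_sub[OF N s A sum sq])
  moreover have "- ?R z \<le> ?c * (- ?R (z - 1) - ?R (z + 1)) / 2"
    using negative_ramp_sub[of frac_below E z] frac_below_eq_0 frac_below_le_one[OF N] E by simp
  ultimately have "?B z - ?R z
      \<le> (if z \<le> int s then 1 else 0) + ?c * ((?B (z - 1) - ?R (z - 1)) + (?B (z + 1) - ?R (z + 1))) / 2"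
    by (simp add: algebra_simps add_divide_distrib diff_divide_distrib)
  then have "lower_barrier A s E z \<le> ((if z \<le> int s then 1 else 0)
      + ?c * ((?B (z - 1) - ?R (z - 1)) + (?B (z + 1) - ?R (z + 1))) / 2) / real N"
    unfolding lower_barrier_def by (rule divide_right_mono) simp
  also have "\<dots> = (if z \<le> int s then 1 / real N else 0)
      + ?c * (lower_barrier A s E (z - 1) + lower_barrier A s E (z + 1)) / 2"
  proof -
    have "(a + c * (x + y) / 2) / n = a / n + c * (x / n + y / n) / 2" for a c x y n :: real
      by (cases "n = 0") (simp_all add: field_simps)
    then show ?thesis
      by (simp add: lower_barrier_def)
  qed
  finally show ?thesis .
qed

lemma lower_barrier_nonpos_below: "0 \<le> E \<Longrightarrow> z \<le> int (s div 2) \<Longrightarrow> lower_barrier A s E z \<le> 0"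
  by (simp add: lower_barrier_def barrier_eq_0)

lemma lower_barrier_nonpos_above:
  assumes "0 \<le> A" "0 \<le> E" "real (s^2) \<le> E * real_of_int z"
  shows "lower_barrier A s E z \<le> 0"
proof -
  have "E * real_of_int z \<le> E * max 0 (real_of_int z)"
    using assms by (intro mult_left_mono) auto
  then have "barrier A s z - E * max 0 (real_of_int z) \<le> 0"
    using barrier_le[of A s z] assms by linarith
  then show ?thesis
    by (simp add: lower_barrier_def divide_nonpos_nonneg)
qed

lemma lower_barrier_le_attach_prob_from:
  assumes N: "N \<ge> 1" and i: "i \<in> {1..N}" and s: "1 \<le> \<sigma> i" and A: "0 \<le> A" and E: "0 < E"
    and sum: "real (\<Sum>a=1..N. \<sigma> a) < real N / 2"
    and sq: "real (\<Sum>a=1..N. (\<sigma> a)^2) \<le> A * real N"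
  shows "lower_barrier A (\<sigma> i) E z \<le> attach_prob_from i z"
proof (rule subsolution_le_solution[where c = frac_below and lo = "int (\<sigma> i div 2)"
      and hi = "\<lceil>real ((\<sigma> i)^2) / E\<rceil>"])
  show "0 \<le> frac_below z \<and> frac_below z \<le> 1" for z
    by (simp add: frac_below_nonneg frac_below_le_one[OF N])
  show "attach_prob_from i z = (if z \<le> int (\<sigma> i) then 1 / real N else 0)
      + frac_below z * (attach_prob_from i (z - 1) + attach_prob_from i (z + 1)) / 2" for z
    by (rule attach_prob_from_rec[OF N i])
  show "0 \<le> attach_prob_from i z" for z
    by (simp add: attach_prob_from_def)
  show "lower_barrier A (\<sigma> i) E z \<le> (if z \<le> int (\<sigma> i) then 1 / real N else 0)
      + frac_below z * (lower_barrier A (\<sigma> i) E (z - 1) + lower_barrier A (\<sigma> i) E (z + 1)) / 2"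
    for z
    using lower_barrier_sub[OF N s A _ sum sq] E by simp
  show "lower_barrier A (\<sigma> i) E z \<le> 0" if "z \<le> int (\<sigma> i div 2)" for z
    using lower_barrier_nonpos_below that E by simp
  show "lower_barrier A (\<sigma> i) E z \<le> 0" if "\<lceil>real ((\<sigma> i)^2) / E\<rceil> \<le> z" for z
  proof (rule lower_barrier_nonpos_above)
    have "real ((\<sigma> i)^2) / E \<le> real_of_int z"
      using that le_of_int_ceiling[of "real ((\<sigma> i)^2) / E"] by linarith
    then show "real ((\<sigma> i)^2) \<le> E * real_of_int z"
      using E by (simp add: pos_divide_le_eq mult.commute)
  qed (use A E in auto)
qed

lemma attach_prob_from_ge:
  assumes N: "N \<ge> 1" and i: "i \<in> {1..N}" and A: "0 \<le> A"
    and sum: "real (\<Sum>a=1..N. \<sigma> a) < real N / 2"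
    and sq: "real (\<Sum>a=1..N. (\<sigma> a)^2) \<le> A * real N"
    and M: "\<sigma> i \<le> M"
  shows "exp (- 4 * A) / (8 * (1 + 8 * A)) * real ((\<sigma> i)^2) / real N
    \<le> attach_prob_from i (int M + 1)"
proof (cases "\<sigma> i = 0")
  case True
  then show ?thesis
    by (simp add: attach_prob_from_def)
next
  case False
  define X where "X = exp (- 4 * A) * real ((\<sigma> i)^2) / (1 + 8 * A)"
  \<comment> \<open>The linear correction makes the subsolution negative far above, and costs only half of the
    barrier at the starting height.\<close>
  define E where "E = X / (8 * (real M + 1))"
  have "X / 4 \<le> barrier A (\<sigma> i) (int M + 1)"
    using barrier_start_ge[OF N _ sq M] A by (simp add: X_def field_simps)
  moreover have "E * max 0 (real_of_int (int M + 1)) = X / 8"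
    by (simp add: E_def field_simps add_pos_nonneg)
  ultimately have "X / 8 \<le> barrier A (\<sigma> i) (int M + 1) - E * max 0 (real_of_int (int M + 1))"
    by linarith
  then have "X / 8 / real N \<le> lower_barrier A (\<sigma> i) E (int M + 1)"
    unfolding lower_barrier_def by (rule divide_right_mono) simp
  also have "\<dots> \<le> attach_prob_from i (int M + 1)"
    using False A
    by (intro lower_barrier_le_attach_prob_from[OF N i _ _ _ sum sq]) (auto simp: E_def X_def)
  finally show ?thesis
    by (simp add: X_def)
qed

end

lemma attach_prob_eq_attach_prob_from:
  "attach_prob N \<sigma> i = attach_prob_from N \<sigma> i (int (Max (\<sigma> ` {1..N})) + 1)"
proof -
  have "attaches_to N \<sigma> i = attaches_from \<sigma> i (int (Max (\<sigma> ` {1..N})) + 1)"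
    by (simp add: attaches_to_def attaches_from_def expl_Z_def expl_X_def walk_height_def
        explorer_space_def space_stream_space)
  then show ?thesis
    by (simp add: attach_prob_def attach_prob_from_def)
qed

theorem corollary4p1:
  shows "\<forall>A::real. A > 0 \<longrightarrow> (\<exists>\<kappa>::real. \<kappa> > 0 \<and>
    (\<forall>N::nat. N \<ge> 2 \<longrightarrow> (\<forall>\<sigma>::nat \<Rightarrow> nat. early_regime A N \<sigma> \<longrightarrow>
      (\<forall>i \<in> {1..N}. attach_prob N \<sigma> i \<ge> \<kappa> * real ((\<sigma> i)^2) / real N))))"
proof (intro allI impI)
  fix A :: real
  assume A: "A > 0"
  show "\<exists>\<kappa>>0. \<forall>N\<ge>2. \<forall>\<sigma>. early_regime A N \<sigma> \<longrightarrow>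
      (\<forall>i\<in>{1..N}. \<kappa> * real ((\<sigma> i)^2) / real N \<le> attach_prob N \<sigma> i)"
  proof (intro exI[of _ "exp (- 4 * A) / (8 * (1 + 8 * A))"] conjI allI impI ballI)
    show "0 < exp (- 4 * A) / (8 * (1 + 8 * A))"
      using A by simp
    fix N :: nat and \<sigma> :: "nat \<Rightarrow> nat" and i
    assume "N \<ge> 2" and "early_regime A N \<sigma>" and i: "i \<in> {1..N}"
    moreover have "\<sigma> i \<le> Max (\<sigma> ` {1..N})"
      using i by (intro Max_ge) auto
    ultimately show
      "exp (- 4 * A) / (8 * (1 + 8 * A)) * real ((\<sigma> i)^2) / real N \<le> attach_prob N \<sigma> i"
      using attach_prob_from_ge[of N i A \<sigma>] A
      by (simp add: early_regime_def attach_prob_eq_attach_prob_from)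
  qed
qed

end
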